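(* Let $\mathcal{F}=\{f_1,\dots,f_{M_1}\}$ be a collection of polynomials on $\mathbb{R}^n$ satisfying property $R$. For $\varpi\in\mathbb{R}^n$ let $P^\varpi(z)=z-\varpi$. Then for any probability measure $\mu$ on $\mathbb{R}^n$, $\mu\in\mathbb{M}^{pc}_{\mathcal{F}}(\varpi)$ if and only if $(P^\varpi)_\sharp\mu\in\mathbb{M}^{pc}_{\mathcal{F}}(0)$.
   Context: $\mathcal{L}(\mathcal{F})=\{\sum_i\lambda_if_i+\lambda_0:f_i\in\mathcal{F},\lambda_i\in\mathbb{R}\}$; $\mathcal{F}$ satisfies property $R$ if $z\mapsto f(z-z_0)$ lies in $\mathcal{L}(\mathcal{F})$ for every $f\in\mathcal{F}$ and $z_0\in\mathbb{R}^n$. $\mathbb{M}^{pc}_{\mathcal{F}}(\varpi)$ is the set of probability measures $\mu$ on $\mathbb{R}^n$ with $\int z\,d\mu=\varpi$ and $\int f\,d\mu=f(\int z\,d\mu)$ for all $f\in\mathcal{F}$. $(P^\varpi)_\sharp\mu$ denotes the push-forward of $\mu$ under $P^\varpi$. *)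

theory Defs
  imports "HOL-Analysis.Analysis" "HOL-Probability.Probability"
begin

definition lin_span_const :: "(real^'n \<Rightarrow> real) set \<Rightarrow> (real^'n \<Rightarrow> real) set" where
  "lin_span_const F = {g. \<exists>S c lam0. finite S \<and> S \<subseteq> F \<and>
      g = (\<lambda>z. (\<Sum>f\<in>S. c f * f z) + lam0)}"

definition property_R :: "(real^'n \<Rightarrow> real) set \<Rightarrow> bool" where
  "property_R F \<longleftrightarrow> (\<forall>f\<in>F. \<forall>z0. (\<lambda>z. f (z - z0)) \<in> lin_span_const F)"

definition Mpc :: "(real^'n \<Rightarrow> real) set \<Rightarrow> real^'n \<Rightarrow> (real^'n) measure set" where
  "Mpc F w = {\<mu>. prob_space \<mu> \<and> sets \<mu> = sets borel \<and>
      integrable \<mu> (\<lambda>z. z) \<and> (\<integral>z. z \<partial>\<mu>) = w \<and>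
      (\<forall>f\<in>F. integrable \<mu> f \<and> (\<integral>z. f z \<partial>\<mu>) = f (\<integral>z. z \<partial>\<mu>))}"

end

theory Submission
  imports Defs
begin

(* Translating a measure by v moves its barycenter by v and turns the integral of f into
   the integral of the translate f (z - v), which by property R lies in L(F); the linear
   constraints of M^pc are stable under taking such combinations, so M^pc F w is mapped into
   M^pc F (w - v). Translating back by -v gives the converse. *)

lemma integral_lin_span_const:
  fixes F :: "(real^'n \<Rightarrow> real) set" and M :: "(real^'n) measure"
  assumes "prob_space M"
    and F: "\<forall>g\<in>F. integrable M g \<and> (\<integral>z. g z \<partial>M) = g b"
    and h: "h \<in> lin_span_const F"
  shows "integrable M h \<and> (\<integral>z. h z \<partial>M) = h b"
proof -
  interpret prob_space M by fact
  obtain S c lam0 where S: "finite S" "S \<subseteq> F"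
    and h_eq: "h = (\<lambda>z. (\<Sum>f\<in>S. c f * f z) + lam0)"
    using h unfolding lin_span_const_def by blast
  have int_sum: "integrable M (\<lambda>z. \<Sum>f\<in>S. c f * f z)"
    using S F by (intro Bochner_Integration.integrable_sum) auto
  have "(\<integral>z. h z \<partial>M) = (\<integral>z. (\<Sum>f\<in>S. c f * f z) \<partial>M) + lam0"
    unfolding h_eq using int_sum
    by (subst Bochner_Integration.integral_add) (auto simp: prob_space)
  also have "(\<integral>z. (\<Sum>f\<in>S. c f * f z) \<partial>M) = (\<Sum>f\<in>S. c f * (\<integral>z. f z \<partial>M))"
    using S F by (subst Bochner_Integration.integral_sum) auto
  also have "\<dots> = (\<Sum>f\<in>S. c f * f b)"
    using S F by (intro sum.cong) auto
  finally show ?thesis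
    using int_sum h_eq by simp
qed

lemma barycenter_distr_translate:
  fixes \<mu> :: "'a::{banach,second_countable_topology} measure"
  assumes "prob_space \<mu>" and S: "sets \<mu> = sets borel" and int_id: "integrable \<mu> (\<lambda>z. z)"
  shows "integrable (distr \<mu> borel (\<lambda>z. z - v)) (\<lambda>z. z)"
    and "(\<integral>z. z \<partial>distr \<mu> borel (\<lambda>z. z - v)) = (\<integral>z. z \<partial>\<mu>) - v"
proof -
  interpret prob_space \<mu> by fact
  have shift_meas: "(\<lambda>z. z - v) \<in> \<mu> \<rightarrow>\<^sub>M borel"
    by (simp add: measurable_cong_sets[OF S refl])
  have int_const: "integrable \<mu> (\<lambda>z. v)"
    by (rule integrable_const)
  have "integrable \<mu> (\<lambda>z. z - v)"
    using int_id int_const by (rule Bochner_Integration.integrable_diff)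
  then show "integrable (distr \<mu> borel (\<lambda>z. z - v)) (\<lambda>z. z)"
    using integrable_distr_eq[OF shift_meas, of "\<lambda>z. z"] by simp
  have "(\<integral>z. z \<partial>distr \<mu> borel (\<lambda>z. z - v)) = (\<integral>z. z - v \<partial>\<mu>)"
    using integral_distr[OF shift_meas, of "\<lambda>z. z"] by simp
  also have "\<dots> = (\<integral>z. z \<partial>\<mu>) - (\<integral>z. v \<partial>\<mu>)"
    using int_id int_const by (rule Bochner_Integration.integral_diff)
  also have "\<dots> = (\<integral>z. z \<partial>\<mu>) - v"
    by (simp add: prob_space)
  finally show "(\<integral>z. z \<partial>distr \<mu> borel (\<lambda>z. z - v)) = (\<integral>z. z \<partial>\<mu>) - v" .
qed

lemma Mpc_distr_translate:
  fixes F :: "(real^'n \<Rightarrow> real) set"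
  assumes R: "property_R F" and \<mu>: "\<mu> \<in> Mpc F w"
  shows "distr \<mu> borel (\<lambda>z. z - v) \<in> Mpc F (w - v)"
  unfolding Mpc_def
proof (intro CollectI conjI ballI)
  from \<mu> have P: "prob_space \<mu>" and S: "sets \<mu> = sets borel"
    and int_id: "integrable \<mu> (\<lambda>z. z)" and bar: "(\<integral>z. z \<partial>\<mu>) = w"
    and Fm: "\<forall>g\<in>F. integrable \<mu> g \<and> (\<integral>z. g z \<partial>\<mu>) = g w"
    unfolding Mpc_def by auto
  have shift_meas: "(\<lambda>z. z - v) \<in> \<mu> \<rightarrow>\<^sub>M borel"
    by (simp add: measurable_cong_sets[OF S refl])
  show "prob_space (distr \<mu> borel (\<lambda>z. z - v))"
    using P shift_meas by (rule prob_space.prob_space_distr)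
  show "sets (distr \<mu> borel (\<lambda>z. z - v)) = sets borel"
    by simp
  show "integrable (distr \<mu> borel (\<lambda>z. z - v)) (\<lambda>z. z)"
    using P S int_id by (rule barycenter_distr_translate)
  show bar_shift: "(\<integral>z. z \<partial>distr \<mu> borel (\<lambda>z. z - v)) = w - v"
    using barycenter_distr_translate(2)[OF P S int_id] bar by simp
  fix f assume f: "f \<in> F"
  have "(\<lambda>z. f (z - v)) \<in> lin_span_const F"
    using R f unfolding property_R_def by blast
  then have f_shift: "integrable \<mu> (\<lambda>z. f (z - v)) \<and> (\<integral>z. f (z - v) \<partial>\<mu>) = f (w - v)"
    using integral_lin_span_const[OF P Fm] by blast
  have "f \<in> borel_measurable \<mu>"
    using f Fm by (blast intro: borel_measurable_integrable)
  then have f_meas: "f \<in> borel_measurable borel"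
    by (simp add: measurable_cong_sets[OF S refl])
  show "integrable (distr \<mu> borel (\<lambda>z. z - v)) f"
    using integrable_distr_eq[OF shift_meas f_meas] f_shift by simp
  show "(\<integral>z. f z \<partial>distr \<mu> borel (\<lambda>z. z - v)) = f (\<integral>z. z \<partial>distr \<mu> borel (\<lambda>z. z - v))"
    using integral_distr[OF shift_meas f_meas] f_shift bar_shift by simp
qed

lemma distr_translate_inverse:
  fixes \<mu> :: "(real^'n) measure"
  assumes "sets \<mu> = sets borel"
  shows "distr (distr \<mu> borel (\<lambda>z. z - w)) borel (\<lambda>z. z - - w) = \<mu>"
proof -
  have "(\<lambda>z. z - w) \<in> \<mu> \<rightarrow>\<^sub>M borel"
    by (simp add: measurable_cong_sets[OF assms refl])
  then have "distr (distr \<mu> borel (\<lambda>z. z - w)) borel (\<lambda>z. z - - w) = distr \<mu> borel (\<lambda>z. z)"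
    by (simp add: distr_distr comp_def)
  also have "\<dots> = \<mu>"
    using assms[symmetric] by (rule distr_id2)
  finally show ?thesis .
qed

theorem lemma18:
  fixes F :: "(real^'n \<Rightarrow> real) set" and w :: "real^'n" and \<mu> :: "(real^'n) measure"
  assumes "finite F"
    and "\<forall>f\<in>F. polynomial_function f"
    and "property_R F"
    and "prob_space \<mu>" and "sets \<mu> = sets borel"
  shows "\<mu> \<in> Mpc F w \<longleftrightarrow> distr \<mu> borel (\<lambda>z. z - w) \<in> Mpc F 0"
proof
  assume "\<mu> \<in> Mpc F w"
  then have "distr \<mu> borel (\<lambda>z. z - w) \<in> Mpc F (w - w)"
    by (rule Mpc_distr_translate[OF \<open>property_R F\<close>])
  then show "distr \<mu> borel (\<lambda>z. z - w) \<in> Mpc F 0"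
    by simp
next
  assume "distr \<mu> borel (\<lambda>z. z - w) \<in> Mpc F 0"
  then have "distr (distr \<mu> borel (\<lambda>z. z - w)) borel (\<lambda>z. z - - w) \<in> Mpc F (0 - - w)"
    by (rule Mpc_distr_translate[OF \<open>property_R F\<close>])
  then show "\<mu> \<in> Mpc F w"
    unfolding distr_translate_inverse[OF \<open>sets \<mu> = sets borel\<close>] by simp
qed

end
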